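(* Let $\kappa$ be a regular infinite cardinal and $\mu$ a singular cardinal with $\mathrm{cf}(\mu)=\kappa$. Then $\mathrm{add}(\mathcal M_\kappa({}^{\kappa}\mu,\kappa))=\mathrm{add}(\mathcal M_\kappa({}^{\mu}\mu,\mathrm{bd}))=\mathrm{add}(\mathcal M_\kappa({}^{\mu}\mu,\kappa))=\mathrm{add}(\mathcal M_\kappa({}^{\mu}2,\mu))=\mathrm{add}(\mathcal M_\kappa({}^{\mu}\mu,\mu))$ $=\mathrm{cov}(\mathcal M_\kappa({}^{\kappa}\mu,\kappa))=\mathrm{cov}(\mathcal M_\kappa({}^{\mu}\mu,\mathrm{bd}))=\mathrm{cov}(\mathcal M_\kappa({}^{\mu}\mu,\kappa))=\mathrm{cov}(\mathcal M_\kappa({}^{\mu}2,\mu))=\mathrm{cov}(\mathcal M_\kappa({}^{\mu}\mu,\mu))=\kappa^+$.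
   Context: For ordinals $\delta,\rho$, ${}^{\delta}\rho$ is the set of functions $\delta\to\rho$; for a partial function $s\colon\delta\rightharpoonup\rho$, $[s]=\{f\in{}^{\delta}\rho: s\subseteq f\}$. Topologies on ${}^{\delta}\rho$: ${<}\kappa$-box (base $[s]$, $|\mathrm{dom}(s)|<\kappa$), denoted $\kappa$; ${<}\mu$-box (base $[s]$, $|\mathrm{dom}(s)|<\mu$), denoted $\mu$; bounded (base $[s]$, $s\in{}^{\alpha}\rho$, $\alpha<\delta$), denoted $\mathrm{bd}$. A set is $\kappa$-meagre if it is a union of at most $\kappa$ nowhere dense sets; $\mathcal M_\kappa(X,\tau)$ is the ideal of $\kappa$-meagre subsets of $(X,\tau)$. For a proper ideal $\mathcal I$ on $X$: $\mathrm{add}(\mathcal I)$ is the least size of $A\subseteq\mathcal I$ with $\bigcup A\notin\mathcal I$; $\mathrm{cov}(\mathcal I)$ is the least size of $C\subseteq\mathcal I$ with $\bigcup C=X$. *)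

theory Defs
  imports "HOL-Analysis.Analysis"
begin

unbundle cardinal_syntax

definition cyl :: "('a \<rightharpoonup> 'b) \<Rightarrow> ('a \<Rightarrow> 'b) set" where
  "cyl s = {f. s \<subseteq>\<^sub>m (Some \<circ> f)}"

definition box_top :: "'c rel \<Rightarrow> ('a \<Rightarrow> 'b) topology" where
  "box_top r = topology_generated_by {cyl s | s. card_of (dom s) <o r}"

text \<open>The bounded topology on functions whose domain is the ordinal represented
  by the well-order r on UNIV :: 'a set: base [s] with dom s a proper initial segment.\<close>
definition bd_top :: "'a rel \<Rightarrow> ('a \<Rightarrow> 'b) topology" where
  "bd_top r = topology_generated_by {cyl s | s a. dom s = underS r a}"

definition nowhere_dense_in :: "'a topology \<Rightarrow> 'a set \<Rightarrow> bool" where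
  "nowhere_dense_in X A \<longleftrightarrow> A \<subseteq> topspace X \<and> X interior_of (X closure_of A) = {}"

definition meagre_ideal :: "'c rel \<Rightarrow> 'a topology \<Rightarrow> 'a set set" where
  "meagre_ideal k X = {A. \<exists>F. card_of F \<le>o k \<and> (\<forall>N\<in>F. nowhere_dense_in X N) \<and> A = \<Union>F}"

definition add_is :: "'a set set \<Rightarrow> 'c rel \<Rightarrow> bool" where
  "add_is I t \<longleftrightarrow> (\<exists>A. A \<subseteq> I \<and> \<Union>A \<notin> I \<and> card_of A =o t)
                   \<and> (\<forall>A. A \<subseteq> I \<and> \<Union>A \<notin> I \<longrightarrow> t \<le>o card_of A)"

definition cov_is :: "'a set set \<Rightarrow> 'a set \<Rightarrow> 'c rel \<Rightarrow> bool" where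
  "cov_is I X t \<longleftrightarrow> (\<exists>C. C \<subseteq> I \<and> \<Union>C = X \<and> card_of C =o t)
                   \<and> (\<forall>C. C \<subseteq> I \<and> \<Union>C = X \<longrightarrow> t \<le>o card_of C)"

definition cof_is :: "'a rel \<Rightarrow> 'c rel \<Rightarrow> bool" where
  "cof_is r k \<longleftrightarrow> (\<exists>K. K \<subseteq> Field r \<and> cofinal K r \<and> card_of K =o k)
                 \<and> (\<forall>K. K \<subseteq> Field r \<and> cofinal K r \<longrightarrow> k \<le>o card_of K)"

definition add_cov_is :: "'c rel \<Rightarrow> 'a topology \<Rightarrow> 'd rel \<Rightarrow> bool" where
  "add_cov_is k X t \<longleftrightarrow> add_is (meagre_ideal k X) t \<and> cov_is (meagre_ideal k X) (topspace X) t"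

end

theory Submission
  imports Defs
begin

(*
  Each of the five spaces is a space of total functions whose topology has a base of cylinders [s],
  and the admissible conditions s are closed under unions of chains of length less than kappa: for
  the kappa-box topologies because kappa is regular, for the bounded topology because cf(mu) = kappa,
  and for the mu-box topologies because fewer than kappa sets of size less than mu have a union of
  size less than mu.  A transfinite recursion of length kappa then produces a condition inside any
  kappa given open dense sets, so kappa nowhere dense sets never cover the space: add and cov are at
  least kappa^+.
  Conversely, kappa^+ open dense sets U_xi such that every point lies in at most kappa of them have
  nowhere dense complements covering the space, while no kappa of these complements do; so add and
  cov are at most kappa^+.  For the kappa-box and the bounded topology, U_xi says that f takes the
  value xi at one of kappa fixed coordinates (chosen cofinal for the bounded topology).  For the
  mu-box topologies a condition may fix any fewer than mu coordinates.  There, for each point j of a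
  cofinal set of size kappa, the tails of a regular cardinal below mu give a family T_j of pairwise
  intersecting sets of size less than mu such that every set of size less than mu misses a member of
  some T_j; U_xi says that f codes xi on a member of some T_j, and since the members of T_j meet, f
  codes at most one xi for each j.
*)

section \<open>Cardinals\<close>

lemma Card_order_if_card_order: "card_order r \<Longrightarrow> Card_order r"
  using card_order_on_Card_order by blast

lemma wo_rel_if_card_order: "card_order r \<Longrightarrow> wo_rel r"
  by (rule Card_order_wo_rel[OF Card_order_if_card_order])

lemma card_order_total: "card_order r \<Longrightarrow> (a, b) \<in> r \<or> (b, a) \<in> r"
  using wo_rel.TOTALS[OF wo_rel_if_card_order, of r] Field_card_order[of r] by simp

lemma card_order_underS_mono: "card_order r \<Longrightarrow> (a, b) \<in> r \<Longrightarrow> underS r a \<subseteq> underS r b"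
  by (rule underS_incr[OF wo_rel.TRANS wo_rel.ANTISYM]) (simp_all add: wo_rel_if_card_order)

lemma card_of_UNIV_ordIso: "card_order (r :: 'a rel) \<Longrightarrow> |UNIV :: 'a set| =o r"
  using card_of_Field_ordIso[OF Card_order_if_card_order, of r] Field_card_order[of r] by simp

lemma ordLeq_card_of_UNIV: "card_order (r :: 'a rel) \<Longrightarrow> r \<le>o |UNIV :: 'a set|"
  by (rule ordIso_imp_ordLeq[OF ordIso_symmetric[OF card_of_UNIV_ordIso]])

lemma card_of_underS_ordLess: "card_order r \<Longrightarrow> |underS r a| <o r"
  using card_of_underS[OF Card_order_if_card_order, of r a] Field_card_order[of r] by simp

lemma card_of_finite_ordLess: "finite A \<Longrightarrow> Card_order r \<Longrightarrow> cinfinite r \<Longrightarrow> |A| <o r"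
  using finite_ordLess_infinite[OF card_of_Well_order card_order_on_well_order_on]
  unfolding cinfinite_def Field_card_of by blast

lemma card_of_Times_ordLess_infinite_Field:
  assumes r: "Card_order r" "cinfinite r" and A: "|A| <o r" and B: "|B| <o r"
  shows "|A \<times> B| <o r"
proof (cases "finite A \<and> finite B")
  case True
  then show ?thesis by (intro card_of_finite_ordLess r) simp
next
  case False
  have "|A| \<le>o |B| \<or> |B| \<le>o |A|" by (rule ordLeq_total[OF card_of_Well_order card_of_Well_order])
  then show ?thesis
  proof
    assume AB: "|A| \<le>o |B|"
    then have "infinite B" using False card_of_ordLeq_finite by blast
    then have "|A \<times> B| \<le>o |B|"
      using AB by (intro card_of_Times_ordLeq_infinite_Field)
        (simp_all add: Field_card_of ordLeq_refl card_of_card_order_on)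
    then show ?thesis using B by (rule ordLeq_ordLess_trans)
  next
    assume BA: "|B| \<le>o |A|"
    then have "infinite A" using False card_of_ordLeq_finite by blast
    then have "|A \<times> B| \<le>o |A|"
      using BA by (intro card_of_Times_ordLeq_infinite_Field)
        (simp_all add: Field_card_of ordLeq_refl card_of_card_order_on)
    then show ?thesis using A by (rule ordLeq_ordLess_trans)
  qed
qed

lemma exists_subset_card_of_ordIso:
  fixes r :: "'r rel" and A :: "'a set"
  assumes "Card_order r" and "r \<le>o |A|"
  obtains B where "B \<subseteq> A" and "|B| =o r"
proof -
  have "|Field r| \<le>o |A|"
    by (rule ordIso_ordLeq_trans[OF card_of_Field_ordIso[OF assms(1)] assms(2)])
  then obtain B where B: "B \<subseteq> A" "|Field r| =o |B|"
    using iffD1[OF internalize_card_of_ordLeq2] by blast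
  have "|B| =o r"
    by (rule ordIso_transitive[OF ordIso_symmetric[OF B(2)] card_of_Field_ordIso[OF assms(1)]])
  with B(1) show thesis by (rule that)
qed

lemma card_of_ordLeq_if_unique_index:
  assumes "\<And>\<xi>. \<xi> \<in> Q \<Longrightarrow> \<exists>j\<in>J. P j \<xi>"
    and "\<And>j \<xi> \<xi>'. j \<in> J \<Longrightarrow> P j \<xi> \<Longrightarrow> P j \<xi>' \<Longrightarrow> \<xi> = \<xi>'"
  shows "|Q| \<le>o |J|"
proof -
  define g where "g j = (SOME \<xi>. P j \<xi>)" for j
  have "Q \<subseteq> g ` J"
  proof
    fix \<xi> assume "\<xi> \<in> Q"
    then obtain j where j: "j \<in> J" "P j \<xi>" using assms(1) by blast
    then have "P j (g j)" unfolding g_def by (metis someI)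
    then have "\<xi> = g j" using assms(2) j by blast
    then show "\<xi> \<in> g ` J" using j(1) by blast
  qed
  then show ?thesis by (rule ordLeq_transitive[OF card_of_mono1 card_of_image])
qed

lemma card_of_fst_vimage_inj:
  assumes "inj \<pi>"
  shows "|fst ` (\<pi> -` A)| \<le>o |A|"
proof -
  have "inj_on \<pi> (\<pi> -` A) \<and> \<pi> ` (\<pi> -` A) \<subseteq> A" using inj_on_subset[OF assms] by blast
  then have "|\<pi> -` A| \<le>o |A|" by (intro iffD1[OF card_of_ordLeq] exI)
  then show ?thesis by (rule ordLeq_transitive[OF card_of_image])
qed

lemma cof_is_bounded:
  assumes m: "card_order m" and cof: "cof_is m k" and K: "|K| <o k"
  shows "\<exists>b. \<forall>x\<in>K. (x, b) \<in> m"
proof -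
  have "\<not> cofinal K m"
  proof
    assume "cofinal K m"
    then have "k \<le>o |K|" using cof Field_card_order[OF m] unfolding cof_is_def by blast
    then show False using not_ordLess_ordLeq[OF K] by blast
  qed
  then obtain b where "\<forall>x\<in>K. b = x \<or> (b, x) \<notin> m"
    unfolding cofinal_def Field_card_order[OF m] by blast
  then have "\<forall>x\<in>K. (x, b) \<in> m" using card_order_total[OF m] wo_rel.REFL[OF wo_rel_if_card_order[OF m]]
    unfolding refl_on_def Field_card_order[OF m] by metis
  then show ?thesis ..
qed

lemma card_of_ordLess_underS:
  assumes m: "card_order m" and A: "|A| <o m"
  shows "\<exists>a. |A| \<le>o |underS m a|"
proof -
  have W: "Well_order m" by (rule card_order_on_well_order_on[OF Card_order_if_card_order[OF m]])
  obtain a where a: "|A| =o Restr m (underS m a)"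
    using ordLess_iff_ordIso_Restr[OF W card_of_Well_order] A by blast
  have "|A| \<le>o |Field (Restr m (underS m a))|"
    using card_of_mono2[OF ordIso_imp_ordLeq[OF a]] by (simp add: Field_card_of)
  also have "|Field (Restr m (underS m a))| \<le>o |underS m a|"
    by (rule card_of_mono1[OF Field_Restr_subset])
  finally show ?thesis by blast
qed

lemma regularCard_ordLess_subset_under:
  assumes r: "Card_order r" "regularCard r" and P: "P \<subseteq> Field r" "|P| <o r"
  shows "\<exists>c\<in>Field r. P \<subseteq> under r c"
proof -
  have wo: "wo_rel r" by (rule Card_order_wo_rel[OF r(1)])
  have "relChain r (under r)"
    unfolding relChain_def using under_incr[OF wo_rel.TRANS[OF wo]] by blast
  moreover have "P \<subseteq> (\<Union>c\<in>Field r. under r c)"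
    using Refl_under_in[OF wo_rel.REFL[OF wo]] P(1) by blast
  ultimately show ?thesis by (rule regularCard_UNION[OF r _ _ P(2)])
qed

lemma regularCard_linked_family:
  fixes r :: "'r rel"
  assumes r: "Card_order r" "cinfinite r" "regularCard r" and large: "r \<le>o |UNIV :: 'a set|"
  shows "\<exists>T :: 'a set set. (\<forall>Y\<in>T. Y \<noteq> {} \<and> |Y| \<le>o r) \<and> (\<forall>Y\<in>T. \<forall>Y'\<in>T. Y \<inter> Y' \<noteq> {})
    \<and> (\<forall>D :: 'a set. |D| <o r \<longrightarrow> (\<exists>Y\<in>T. Y \<inter> D = {}))"
proof -
  have wo: "wo_rel r" by (rule Card_order_wo_rel[OF r(1)])
  have "|Field r| \<le>o |UNIV :: 'a set|"
    by (rule ordIso_ordLeq_trans[OF card_of_Field_ordIso[OF r(1)] large])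
  then obtain e :: "'r \<Rightarrow> 'a" where e: "inj_on e (Field r)" using iffD2[OF card_of_ordLeq] by blast
  define tail where "tail c = Field r - under r c" for c
  define T where "T = (\<lambda>c. e ` tail c) ` Field r"
  have tail_ne: "tail c \<noteq> {}" for c
    using Card_order_infinite_not_under[OF r(1)] r(2) under_Field[of r c]
    unfolding tail_def cinfinite_def by blast
  have "Y \<noteq> {} \<and> |Y| \<le>o r" if Y: "Y \<in> T" for Y
  proof -
    obtain c where c: "Y = e ` tail c" using Y unfolding T_def by blast
    have "|Y| \<le>o |Field r|"
      unfolding c tail_def by (rule ordLeq_transitive[OF card_of_image card_of_mono1]) blast
    then have "|Y| \<le>o r" by (rule ordLeq_ordIso_trans[OF _ card_of_Field_ordIso[OF r(1)]])
    then show ?thesis using tail_ne c by blast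
  qed
  moreover have "Y \<inter> Y' \<noteq> {}" if Y: "Y \<in> T" "Y' \<in> T" for Y Y'
  proof -
    obtain c c' where c: "c \<in> Field r" "Y = e ` tail c" and c': "c' \<in> Field r" "Y' = e ` tail c'"
      using Y unfolding T_def by blast
    have "(c, c') \<in> r \<or> (c', c) \<in> r" using wo_rel.TOTALS[OF wo] c(1) c'(1) by blast
    then have "tail c' \<subseteq> tail c \<or> tail c \<subseteq> tail c'"
      using under_incr[OF wo_rel.TRANS[OF wo]] unfolding tail_def by blast
    then have "Y' \<subseteq> Y \<or> Y \<subseteq> Y'" unfolding c(2) c'(2) by (blast intro: image_mono)
    moreover have "Y \<noteq> {}" "Y' \<noteq> {}" using tail_ne c(2) c'(2) by auto
    ultimately show ?thesis by (metis Int_absorb1 Int_absorb2)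
  qed
  moreover have "\<exists>Y\<in>T. Y \<inter> D = {}" if D: "|D| <o r" for D :: "'a set"
  proof -
    define P where "P = {x \<in> Field r. e x \<in> D}"
    have P_Field: "P \<subseteq> Field r" unfolding P_def by blast
    then have "inj_on e P \<and> e ` P \<subseteq> D" using inj_on_subset[OF e] unfolding P_def by blast
    then have "|P| \<le>o |D|" by (intro iffD1[OF card_of_ordLeq] exI)
    then have "|P| <o r" using D by (rule ordLeq_ordLess_trans)
    then obtain c where c: "c \<in> Field r" "P \<subseteq> under r c"
      using regularCard_ordLess_subset_under[OF r(1,3) P_Field] by blast
    have "e ` tail c \<inter> D = {}" using c(2) unfolding tail_def P_def by blast
    then show ?thesis using c(1) unfolding T_def by blast
  qed
  ultimately show ?thesis by (intro exI[of _ T]) blast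
qed

section \<open>Cylinders\<close>

lemma cyl_iff: "f \<in> cyl s \<longleftrightarrow> (\<forall>x y. s x = Some y \<longrightarrow> f x = y)"
  unfolding cyl_def map_le_def by (force simp: dom_def)

lemma cyl_antimono: "s \<subseteq>\<^sub>m t \<Longrightarrow> cyl t \<subseteq> cyl s"
  unfolding cyl_def using map_le_trans by blast

lemma cyl_nonempty: "cyl s \<noteq> {}"
proof -
  have "(\<lambda>x. case s x of Some y \<Rightarrow> y | None \<Rightarrow> undefined) \<in> cyl s"
    by (auto simp: cyl_iff)
  then show ?thesis by blast
qed

lemma map_le_if_cyl_dom_subset: "f \<in> cyl s \<Longrightarrow> f \<in> cyl t \<Longrightarrow> dom s \<subseteq> dom t \<Longrightarrow> s \<subseteq>\<^sub>m t"
  unfolding map_le_def cyl_iff by fastforce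

lemma map_le_map_add_if_disjoint: "dom w \<inter> dom s = {} \<Longrightarrow> w \<subseteq>\<^sub>m w ++ s"
  using map_add_comm[of w s] map_le_map_add[of w s] by simp

lemma chain_map_le_upper_bound:
  assumes C: "Complete_Partial_Order.chain (\<subseteq>\<^sub>m) C"
  obtains u where "\<And>c. c \<in> C \<Longrightarrow> c \<subseteq>\<^sub>m u" and "dom u = (\<Union>c\<in>C. dom c)"
proof -
  define u where "u x = (if \<exists>c\<in>C. x \<in> dom c then (SOME c. c \<in> C \<and> x \<in> dom c) x else None)" for x
  have agree: "c x = d x" if "c \<in> C" "d \<in> C" "x \<in> dom c" "x \<in> dom d" for c d x
    using chainD[OF C that(1,2)] that(3,4) unfolding map_le_def by metis
  have ub: "c \<subseteq>\<^sub>m u" if c: "c \<in> C" for c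
    unfolding map_le_def
  proof
    fix x assume x: "x \<in> dom c"
    define d where "d = (SOME c. c \<in> C \<and> x \<in> dom c)"
    have "\<exists>c. c \<in> C \<and> x \<in> dom c" using c x by blast
    then have d: "d \<in> C \<and> x \<in> dom d" unfolding d_def by (rule someI_ex)
    have "u x = d x" unfolding u_def d_def using c x by auto
    then show "c x = u x" using agree c x d by simp
  qed
  have "dom u \<subseteq> (\<Union>c\<in>C. dom c)"
  proof
    fix x assume x: "x \<in> dom u"
    show "x \<in> (\<Union>c\<in>C. dom c)"
    proof (rule ccontr)
      assume "x \<notin> (\<Union>c\<in>C. dom c)"
      then have "u x = None" unfolding u_def by auto
      then show False using x by blast
    qed
  qed
  moreover have "(\<Union>c\<in>C. dom c) \<subseteq> dom u" using ub map_le_implies_dom_le by blast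
  ultimately show thesis using that ub by blast
qed

lemma chain_image_card_order:
  assumes "card_order k" and "\<And>\<beta> \<gamma>. \<beta> \<in> A \<Longrightarrow> \<gamma> \<in> A \<Longrightarrow> (\<beta>, \<gamma>) \<in> k \<Longrightarrow> g \<beta> \<subseteq>\<^sub>m g \<gamma>"
  shows "Complete_Partial_Order.chain (\<subseteq>\<^sub>m) (g ` A)"
proof (rule chainI)
  fix c d assume "c \<in> g ` A" "d \<in> g ` A"
  then obtain \<beta> \<gamma> where "\<beta> \<in> A" "\<gamma> \<in> A" "c = g \<beta>" "d = g \<gamma>" by blast
  then show "c \<subseteq>\<^sub>m d \<or> d \<subseteq>\<^sub>m c" using card_order_total[OF assms(1), of \<beta> \<gamma>] assms(2) by blast
qed

lemma card_of_cyl_singleton_values: "|{\<xi>. \<exists>i\<in>I. f \<in> cyl [i \<mapsto> \<xi>]}| \<le>o |I|"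
proof -
  have "{\<xi>. \<exists>i\<in>I. f \<in> cyl [i \<mapsto> \<xi>]} \<subseteq> f ` I" by (auto simp: cyl_iff)
  then show ?thesis by (rule ordLeq_transitive[OF card_of_mono1 card_of_image])
qed

definition column_code :: "('a \<times> 'c \<Rightarrow> 'a) \<Rightarrow> 'c set \<Rightarrow> 'b \<Rightarrow> 'b \<Rightarrow> 'a set \<Rightarrow> 'c \<Rightarrow> 'a \<rightharpoonup> 'b" where
  "column_code \<pi> \<Xi> b\<^sub>0 b\<^sub>1 Y \<xi> z =
    (if z \<in> \<pi> ` (Y \<times> \<Xi>) then Some (if snd (inv \<pi> z) = \<xi> then b\<^sub>1 else b\<^sub>0) else None)"

lemma dom_column_code: "dom (column_code \<pi> \<Xi> b\<^sub>0 b\<^sub>1 Y \<xi>) = \<pi> ` (Y \<times> \<Xi>)"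
  unfolding column_code_def dom_def by auto

lemma column_code_at:
  "inj \<pi> \<Longrightarrow> x \<in> Y \<Longrightarrow> \<eta> \<in> \<Xi> \<Longrightarrow> column_code \<pi> \<Xi> b\<^sub>0 b\<^sub>1 Y \<xi> (\<pi> (x, \<eta>)) = Some (if \<eta> = \<xi> then b\<^sub>1 else b\<^sub>0)"
  unfolding column_code_def by (simp add: inv_f_f)

lemma column_code_determines:
  assumes \<pi>: "inj \<pi>" and b: "b\<^sub>0 \<noteq> b\<^sub>1" and \<xi>: "\<xi> \<in> \<Xi>" and x: "x \<in> Y" "x \<in> Y'"
    and f: "f \<in> cyl (column_code \<pi> \<Xi> b\<^sub>0 b\<^sub>1 Y \<xi>)" "f \<in> cyl (column_code \<pi> \<Xi> b\<^sub>0 b\<^sub>1 Y' \<xi>')"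
  shows "\<xi> = \<xi>'"
proof -
  have "f (\<pi> (x, \<xi>)) = b\<^sub>1"
    using f(1) column_code_at[OF \<pi> x(1) \<xi>, where b\<^sub>0 = b\<^sub>0 and b\<^sub>1 = b\<^sub>1 and \<xi> = \<xi>]
    unfolding cyl_iff by simp
  moreover have "f (\<pi> (x, \<xi>)) = (if \<xi> = \<xi>' then b\<^sub>1 else b\<^sub>0)"
    using f(2) column_code_at[OF \<pi> x(2) \<xi>, where b\<^sub>0 = b\<^sub>0 and b\<^sub>1 = b\<^sub>1 and \<xi> = \<xi>']
    unfolding cyl_iff by simp
  ultimately show ?thesis using b by (auto split: if_splits)
qed

section \<open>Meagre ideals\<close>

lemma nowhere_dense_in_diff_open_dense:
  assumes "openin X U" and "X closure_of U = topspace X"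
  shows "nowhere_dense_in X (topspace X - U)"
proof -
  have "X closure_of (topspace X - U) = topspace X - U"
    using assms(1) by (simp add: closure_of_complement interior_of_openin)
  then show ?thesis
    using assms(2) by (simp add: nowhere_dense_in_def interior_of_complement)
qed

lemma nowhere_dense_in_meagre_ideal:
  fixes k :: "'k rel"
  assumes "card_order k" and "nowhere_dense_in X N"
  shows "N \<in> meagre_ideal k X"
proof -
  have "|{N}| \<le>o |UNIV :: 'k set|" by (rule card_of_singl_ordLeq) simp
  then have "|{N}| \<le>o k" by (rule ordLeq_ordIso_trans[OF _ card_of_UNIV_ordIso[OF assms(1)]])
  then show ?thesis using assms(2) unfolding meagre_ideal_def by (intro CollectI exI[of _ "{N}"]) simp
qed

lemma meagre_ideal_Union:
  assumes "card_order k" and "cinfinite k"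
    and "A \<subseteq> meagre_ideal k X" and "|A| \<le>o k"
  shows "\<Union>A \<in> meagre_ideal k X"
proof -
  have "\<forall>a\<in>A. \<exists>F. |F| \<le>o k \<and> (\<forall>N\<in>F. nowhere_dense_in X N) \<and> \<Union>F = a"
    using assms(3) unfolding meagre_ideal_def by blast
  then obtain F where F: "\<forall>a\<in>A. |F a| \<le>o k \<and> (\<forall>N\<in>F a. nowhere_dense_in X N) \<and> \<Union>(F a) = a"
    by (rule bchoice[THEN exE])
  let ?G = "\<Union>a\<in>A. F a"
  have "|?G| \<le>o k"
  proof (rule card_of_UNION_ordLeq_infinite_Field)
    show "\<not> finite (Field k)" using assms(2) unfolding cinfinite_def .
    show "Card_order k" by (rule Card_order_if_card_order[OF assms(1)])
    show "|A| \<le>o k" by (rule assms(4))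
    show "\<forall>a\<in>A. |F a| \<le>o k" using F by blast
  qed
  moreover have "\<forall>N\<in>?G. nowhere_dense_in X N" using F by blast
  moreover have "\<Union>?G = \<Union>A"
  proof -
    have "\<Union>?G = (\<Union>a\<in>A. \<Union>(F a))" by blast
    also have "\<dots> = (\<Union>a\<in>A. a)" using F by (intro SUP_cong) auto
    finally show ?thesis by simp
  qed
  ultimately show ?thesis unfolding meagre_ideal_def by (intro CollectI exI[of _ ?G]) simp
qed

lemma cardSuc_ordLeq_if_Union_notin_meagre_ideal:
  assumes "card_order k" and "cinfinite k"
    and "A \<subseteq> meagre_ideal k X" and "\<Union>A \<notin> meagre_ideal k X"
  shows "cardSuc k \<le>o |A|"
proof -
  have Ck: "Card_order k" by (rule Card_order_if_card_order[OF assms(1)])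
  have "\<not> |A| \<le>o k" using meagre_ideal_Union[OF assms(1-3)] assms(4) by blast
  then have "k <o |A|"
    by (simp add: not_ordLeq_iff_ordLess[OF card_order_on_well_order_on[OF Ck] card_of_Well_order])
  then show ?thesis by (simp add: cardSuc_ordLess_ordLeq[OF Ck card_of_Card_order])
qed

lemma nowhere_dense_cover:
  fixes k :: "'k rel" and U :: "'i \<Rightarrow> 'a set"
  assumes k: "Card_order k" and \<Xi>: "|\<Xi>| =o cardSuc k"
    and U: "\<And>\<xi>. \<xi> \<in> \<Xi> \<Longrightarrow> openin X (U \<xi>) \<and> X closure_of U \<xi> = topspace X"
    and few: "\<And>x. x \<in> topspace X \<Longrightarrow> |{\<xi>\<in>\<Xi>. x \<in> U \<xi>}| \<le>o k"
  obtains C where "\<forall>N\<in>C. nowhere_dense_in X N" and "\<Union>C = topspace X" and "|C| \<le>o cardSuc k"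
proof
  let ?C = "(\<lambda>\<xi>. topspace X - U \<xi>) ` \<Xi>"
  show "\<forall>N\<in>?C. nowhere_dense_in X N" using U by (blast intro: nowhere_dense_in_diff_open_dense)
  show "|?C| \<le>o cardSuc k" by (rule ordLeq_ordIso_trans[OF card_of_image \<Xi>])
  have "\<exists>\<xi>\<in>\<Xi>. x \<notin> U \<xi>" if x: "x \<in> topspace X" for x
  proof (rule ccontr)
    assume "\<not> ?thesis"
    then have "\<Xi> \<subseteq> {\<xi>\<in>\<Xi>. x \<in> U \<xi>}" by blast
    then have "|\<Xi>| \<le>o k" using ordLeq_transitive[OF card_of_mono1 few[OF x]] by blast
    then have "cardSuc k \<le>o k" by (rule ordIso_ordLeq_trans[OF ordIso_symmetric[OF \<Xi>]])
    then show False using not_ordLess_ordLeq[OF cardSuc_greater[OF k]] by blast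
  qed
  then show "\<Union>?C = topspace X" by blast
qed

lemma add_cov_is_cardSuc:
  fixes k :: "'k rel" and X :: "'a topology" and U :: "'i \<Rightarrow> 'a set"
  assumes k: "card_order k" "cinfinite k"
    and Baire: "\<And>F. |F| \<le>o k \<Longrightarrow> \<forall>N\<in>F. nowhere_dense_in X N \<Longrightarrow> \<Union>F \<noteq> topspace X"
    and \<Xi>: "|\<Xi>| =o cardSuc k"
    and U: "\<And>\<xi>. \<xi> \<in> \<Xi> \<Longrightarrow> openin X (U \<xi>) \<and> X closure_of U \<xi> = topspace X"
    and few: "\<And>x. x \<in> topspace X \<Longrightarrow> |{\<xi>\<in>\<Xi>. x \<in> U \<xi>}| \<le>o k"
  shows "add_cov_is k X (cardSuc k)"
proof -
  let ?I = "meagre_ideal k X"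
  have top: "topspace X \<notin> ?I"
  proof
    assume "topspace X \<in> ?I"
    then have "\<exists>F. |F| \<le>o k \<and> (\<forall>N\<in>F. nowhere_dense_in X N) \<and> topspace X = \<Union>F"
      unfolding meagre_ideal_def by (rule CollectD)
    then obtain F where F: "|F| \<le>o k \<and> (\<forall>N\<in>F. nowhere_dense_in X N) \<and> topspace X = \<Union>F" ..
    show False
      using Baire[OF conjunct1[OF F] conjunct1[OF conjunct2[OF F]]] conjunct2[OF conjunct2[OF F]] by simp
  qed
  obtain C where C: "\<forall>N\<in>C. nowhere_dense_in X N" "\<Union>C = topspace X" "|C| \<le>o cardSuc k"
    by (rule nowhere_dense_cover[OF Card_order_if_card_order[OF k(1)] \<Xi> U few])
  have CI: "C \<subseteq> ?I" using C(1) nowhere_dense_in_meagre_ideal[OF k(1)] by blast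
  have lower: "cardSuc k \<le>o |A|" if "A \<subseteq> ?I" "\<Union>A \<notin> ?I" for A :: "'a set set"
    by (rule cardSuc_ordLeq_if_Union_notin_meagre_ideal[OF k that])
  have C_card: "|C| =o cardSuc k"
    using lower[OF CI] C(2,3) top by (simp add: ordIso_iff_ordLeq)
  have "add_is ?I (cardSuc k)"
    unfolding add_is_def
  proof (intro conjI allI impI)
    show "\<exists>A. A \<subseteq> ?I \<and> \<Union>A \<notin> ?I \<and> |A| =o cardSuc k"
      using CI C(2) top C_card by (intro exI[of _ C]) simp
    show "cardSuc k \<le>o |A|" if "A \<subseteq> ?I \<and> \<Union>A \<notin> ?I" for A
      using lower that by blast
  qed
  moreover have "cov_is ?I (topspace X) (cardSuc k)"
    unfolding cov_is_def
  proof (intro conjI allI impI)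
    show "\<exists>A. A \<subseteq> ?I \<and> \<Union>A = topspace X \<and> |A| =o cardSuc k"
      using CI C(2) C_card by (intro exI[of _ C]) simp
    show "cardSuc k \<le>o |A|" if "A \<subseteq> ?I \<and> \<Union>A = topspace X" for A
      using lower top that by metis
  qed
  ultimately show ?thesis unfolding add_cov_is_def ..
qed

section \<open>Topologies generated by cylinders\<close>

definition chains_bounded :: "'k rel \<Rightarrow> ('a \<rightharpoonup> 'b) set \<Rightarrow> bool" where
  "chains_bounded k S \<longleftrightarrow> (\<forall>C \<subseteq> S. Complete_Partial_Order.chain (\<subseteq>\<^sub>m) C \<and> |C| <o k \<longrightarrow> (\<exists>u\<in>S. \<forall>c\<in>C. c \<subseteq>\<^sub>m u))"

lemma transfinite_chain:
  fixes k :: "'k rel" and D :: "'k \<Rightarrow> ('a \<rightharpoonup> 'b) set"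
  assumes k: "card_order k" and S: "chains_bounded k S"
    and D: "\<And>\<alpha>. D \<alpha> \<subseteq> S" and dense: "\<And>\<alpha> s. s \<in> S \<Longrightarrow> \<exists>t\<in>D \<alpha>. s \<subseteq>\<^sub>m t"
  shows "\<exists>g. (\<forall>\<alpha>. g \<alpha> \<in> D \<alpha>) \<and> (\<forall>\<alpha> \<beta>. (\<beta>, \<alpha>) \<in> k \<longrightarrow> g \<beta> \<subseteq>\<^sub>m g \<alpha>)"
proof -
  have wo: "wo_rel k" by (rule wo_rel_if_card_order[OF k])
  define ub where "ub C = (SOME u. u \<in> S \<and> (\<forall>c\<in>C. c \<subseteq>\<^sub>m u))" for C
  define ext where "ext \<alpha> s = (SOME t. t \<in> D \<alpha> \<and> s \<subseteq>\<^sub>m t)" for \<alpha> s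
  have ext: "ext \<alpha> s \<in> D \<alpha> \<and> s \<subseteq>\<^sub>m ext \<alpha> s" if "s \<in> S" for \<alpha> s
  proof -
    have "\<exists>t. t \<in> D \<alpha> \<and> s \<subseteq>\<^sub>m t" using dense[OF that] by blast
    then show ?thesis unfolding ext_def by (rule someI_ex)
  qed
  define H where "H g \<alpha> = ext \<alpha> (ub (g ` underS k \<alpha>))" for g \<alpha>
  have adm: "wo_rel.adm_wo k H" unfolding wo_rel.adm_wo_def[OF wo] H_def by (metis image_cong)
  define g where "g = wo_rel.worec k H"
  have g: "g \<alpha> = ext \<alpha> (ub (g ` underS k \<alpha>))" for \<alpha>
    using wo_rel.worec_fixpoint[OF wo adm] unfolding g_def H_def by metis
  have inv: "g \<alpha> \<in> D \<alpha> \<and> (\<forall>\<beta>\<in>underS k \<alpha>. g \<beta> \<subseteq>\<^sub>m g \<alpha>)" for \<alpha>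
  proof (induction \<alpha> rule: wo_rel.well_order_induct[OF wo])
    case (1 \<alpha>)
    let ?C = "g ` underS k \<alpha>"
    have IH: "g \<beta> \<in> S \<and> (\<forall>\<gamma>\<in>underS k \<beta>. g \<gamma> \<subseteq>\<^sub>m g \<beta>)" if "\<beta> \<in> underS k \<alpha>" for \<beta>
      using 1 D that unfolding underS_def by blast
    have "Complete_Partial_Order.chain (\<subseteq>\<^sub>m) ?C"
    proof (rule chain_image_card_order[OF k])
      fix \<beta> \<gamma> assume \<beta>\<gamma>: "\<beta> \<in> underS k \<alpha>" "\<gamma> \<in> underS k \<alpha>" "(\<beta>, \<gamma>) \<in> k"
      show "g \<beta> \<subseteq>\<^sub>m g \<gamma>"
      proof (cases "\<beta> = \<gamma>")
        case False
        then have "\<beta> \<in> underS k \<gamma>" using \<beta>\<gamma>(3) unfolding underS_def by blast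
        then show ?thesis using IH \<beta>\<gamma>(2) by blast
      qed (simp add: map_le_refl)
    qed
    moreover have "?C \<subseteq> S" using IH by blast
    moreover have "|?C| <o k"
      by (rule ordLeq_ordLess_trans[OF card_of_image card_of_underS_ordLess[OF k]])
    ultimately have "\<exists>u. u \<in> S \<and> (\<forall>c\<in>?C. c \<subseteq>\<^sub>m u)" using S unfolding chains_bounded_def by blast
    then have ub: "ub ?C \<in> S \<and> (\<forall>c\<in>?C. c \<subseteq>\<^sub>m ub ?C)" unfolding ub_def by (rule someI_ex)
    then have "g \<alpha> \<in> D \<alpha> \<and> ub ?C \<subseteq>\<^sub>m g \<alpha>" using g ext by metis
    then show ?case using ub map_le_trans by blast
  qed
  have "g \<beta> \<subseteq>\<^sub>m g \<alpha>" if "(\<beta>, \<alpha>) \<in> k" for \<alpha> \<beta>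
  proof (cases "\<beta> = \<alpha>")
    case False
    then show ?thesis using inv that unfolding underS_def by blast
  qed (simp add: map_le_refl)
  then show ?thesis using inv by blast
qed

locale cylinder_space =
  fixes S :: "('a \<rightharpoonup> 'b) set"
  assumes covers: "\<exists>s\<in>S. f \<in> cyl s"
    and directed: "s \<in> S \<Longrightarrow> u \<in> S \<Longrightarrow> f \<in> cyl s \<Longrightarrow> f \<in> cyl u \<Longrightarrow> \<exists>t\<in>S. s \<subseteq>\<^sub>m t \<and> u \<subseteq>\<^sub>m t \<and> f \<in> cyl t"
begin

abbreviation cyl_topology :: "('a \<Rightarrow> 'b) topology" where
  "cyl_topology \<equiv> topology_generated_by (cyl ` S)"

lemma Union_cyl_eq_UNIV [simp]: "\<Union>(cyl ` S) = UNIV"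
  using covers by blast

lemma topspace_cyl_topology: "topspace cyl_topology = UNIV"
  by simp

lemma openin_cyl: "s \<in> S \<Longrightarrow> openin cyl_topology (cyl s)"
  by (simp add: topology_generated_by_Basis)

lemma openin_cyl_topology_imp_cyl_subset:
  assumes "openin cyl_topology U" and "f \<in> U"
  shows "\<exists>s\<in>S. f \<in> cyl s \<and> cyl s \<subseteq> U"
proof -
  have "generate_topology_on (cyl ` S) U"
    using assms(1) openin_topology_generated_by_iff by blast
  then show ?thesis using assms(2)
  proof (induction arbitrary: f rule: generate_topology_on.induct)
    case (Int a b)
    then obtain s u where "s \<in> S" "f \<in> cyl s" "cyl s \<subseteq> a" and "u \<in> S" "f \<in> cyl u" "cyl u \<subseteq> b"
      by blast
    moreover obtain t where "t \<in> S" "s \<subseteq>\<^sub>m t" "u \<subseteq>\<^sub>m t" "f \<in> cyl t"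
      using directed calculation by blast
    ultimately show ?case using cyl_antimono by blast
  qed blast+
qed

lemma nowhere_dense_in_avoid:
  assumes nd: "nowhere_dense_in cyl_topology N" and s: "s \<in> S"
  shows "\<exists>t\<in>S. s \<subseteq>\<^sub>m t \<and> cyl t \<inter> N = {}"
proof -
  let ?N = "cyl_topology closure_of N"
  have "\<not> cyl s \<subseteq> ?N"
  proof
    assume "cyl s \<subseteq> ?N"
    then have "cyl s \<subseteq> cyl_topology interior_of ?N" by (rule interior_of_maximal[OF _ openin_cyl[OF s]])
    then show False using nd cyl_nonempty unfolding nowhere_dense_in_def by blast
  qed
  then obtain f where f: "f \<in> cyl s - ?N" by blast
  have "openin cyl_topology (cyl s - ?N)" by (rule openin_diff[OF openin_cyl[OF s] closedin_closure_of])
  then obtain u where u: "u \<in> S" "f \<in> cyl u" "cyl u \<subseteq> cyl s - ?N"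
    using openin_cyl_topology_imp_cyl_subset f by blast
  obtain t where t: "t \<in> S" "s \<subseteq>\<^sub>m t" "u \<subseteq>\<^sub>m t"
    using directed[OF s u(1)] f u(2) by blast
  have "N \<subseteq> ?N" by (rule closure_of_subset) simp
  then show ?thesis using t u cyl_antimono[OF t(3)] by blast
qed

lemma open_dense_if_dense_conditions:
  assumes "D \<subseteq> S" and dense: "\<And>s. s \<in> S \<Longrightarrow> \<exists>t\<in>D. s \<subseteq>\<^sub>m t"
  shows "openin cyl_topology (\<Union>(cyl ` D)) \<and> cyl_topology closure_of \<Union>(cyl ` D) = UNIV"
proof
  show "openin cyl_topology (\<Union>(cyl ` D))" using assms(1) openin_cyl by blast
  have "\<Union>(cyl ` D) \<inter> V \<noteq> {}" if V: "openin cyl_topology V" "V \<noteq> {}" for V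
  proof -
    obtain f where "f \<in> V" using V(2) by blast
    then obtain s where s: "s \<in> S" "cyl s \<subseteq> V" using openin_cyl_topology_imp_cyl_subset V(1) by blast
    obtain t where t: "t \<in> D" "s \<subseteq>\<^sub>m t" using dense[OF s(1)] by blast
    show ?thesis using t s cyl_antimono[OF t(2)] cyl_nonempty[of t] by blast
  qed
  then show "cyl_topology closure_of \<Union>(cyl ` D) = UNIV"
    using dense_intersects_open[of cyl_topology "\<Union>(cyl ` D)"] by simp
qed

lemma Union_nowhere_dense_neq_UNIV:
  fixes k :: "'k rel" and F :: "('a \<Rightarrow> 'b) set set"
  assumes k: "card_order k" and S: "chains_bounded k S"
    and F: "|F| \<le>o k" "\<forall>N\<in>F. nowhere_dense_in cyl_topology N"
  shows "\<Union>F \<noteq> UNIV"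
proof (cases "F = {}")
  case False
  have "|F| \<le>o |UNIV :: 'k set|" by (rule ordLeq_transitive[OF F(1) ordLeq_card_of_UNIV[OF k]])
  then have "\<exists>N :: 'k \<Rightarrow> ('a \<Rightarrow> 'b) set. range N = F"
    by (simp add: card_of_ordLeq2[OF False])
  then obtain N :: "'k \<Rightarrow> ('a \<Rightarrow> 'b) set" where N: "range N = F" ..
  define D where "D \<alpha> = {t \<in> S. cyl t \<inter> N \<alpha> = {}}" for \<alpha>
  have D_sub: "D \<alpha> \<subseteq> S" for \<alpha> unfolding D_def by blast
  have dense: "\<exists>t\<in>D \<alpha>. s \<subseteq>\<^sub>m t" if "s \<in> S" for \<alpha> s
    using nowhere_dense_in_avoid[OF _ that] F(2) N unfolding D_def by blast
  obtain g where g: "\<forall>\<alpha>. g \<alpha> \<in> D \<alpha>" "\<forall>\<alpha> \<beta>. (\<beta>, \<alpha>) \<in> k \<longrightarrow> g \<beta> \<subseteq>\<^sub>m g \<alpha>"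
    using transfinite_chain[where D = D, OF k S D_sub dense] by blast
  have "Complete_Partial_Order.chain (\<subseteq>\<^sub>m) (range g)"
    by (rule chain_image_card_order[OF k]) (use g(2) in blast)
  then obtain u where u: "\<And>\<alpha>. g \<alpha> \<subseteq>\<^sub>m u" by (rule chain_map_le_upper_bound) blast
  obtain f where f: "f \<in> cyl u" using cyl_nonempty by blast
  have "f \<in> cyl (g \<alpha>)" for \<alpha> using cyl_antimono[OF u] f by blast
  then have "f \<notin> N \<alpha>" for \<alpha> using g(1) unfolding D_def by blast
  then show ?thesis using N by blast
qed simp

lemma add_cov_is_cardSuc_cyl_topology:
  fixes k :: "'k rel" and \<Xi> :: "'i set" and W :: "'i \<Rightarrow> ('a \<rightharpoonup> 'b) set"
  assumes k: "card_order k" "cinfinite k" and S: "chains_bounded k S"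
    and \<Xi>: "|\<Xi>| =o cardSuc k"
    and dense: "\<And>\<xi> s. \<xi> \<in> \<Xi> \<Longrightarrow> s \<in> S \<Longrightarrow> \<exists>t\<in>S. s \<subseteq>\<^sub>m t \<and> (\<exists>w\<in>W \<xi>. w \<subseteq>\<^sub>m t)"
    and few: "\<And>f. |{\<xi>\<in>\<Xi>. \<exists>w\<in>W \<xi>. f \<in> cyl w}| \<le>o k"
  shows "add_cov_is k cyl_topology (cardSuc k)"
proof (rule add_cov_is_cardSuc[OF k])
  show "\<Union>F \<noteq> topspace cyl_topology" if "|F| \<le>o k" "\<forall>N\<in>F. nowhere_dense_in cyl_topology N" for F
    using Union_nowhere_dense_neq_UNIV[OF k(1) S that] by simp
  define U where "U \<xi> = \<Union>(cyl ` {t \<in> S. \<exists>w\<in>W \<xi>. w \<subseteq>\<^sub>m t})" for \<xi>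
  show "openin cyl_topology (U \<xi>) \<and> cyl_topology closure_of U \<xi> = topspace cyl_topology" if "\<xi> \<in> \<Xi>" for \<xi>
    unfolding U_def topspace_cyl_topology
    by (rule open_dense_if_dense_conditions) (use dense[OF that] in blast)+
  show "|{\<xi>\<in>\<Xi>. f \<in> U \<xi>}| \<le>o k" for f
  proof -
    have "{\<xi>\<in>\<Xi>. f \<in> U \<xi>} \<subseteq> {\<xi>\<in>\<Xi>. \<exists>w\<in>W \<xi>. f \<in> cyl w}"
      unfolding U_def using cyl_antimono by blast
    then show ?thesis by (rule ordLeq_transitive[OF card_of_mono1 few])
  qed
qed (rule \<Xi>)

lemma add_cov_is_cardSuc_cyl_topology_singletons:
  fixes k :: "'k rel" and I :: "'a set"
  assumes k: "card_order k" "cinfinite k" and S: "chains_bounded k S"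
    and I: "|I| =o k" and large: "cardSuc k \<le>o |UNIV :: 'b set|"
    and extend: "\<And>s y. s \<in> S \<Longrightarrow> \<exists>i\<in>I. \<exists>t\<in>S. s \<subseteq>\<^sub>m t \<and> [i \<mapsto> y] \<subseteq>\<^sub>m t"
  shows "add_cov_is k cyl_topology (cardSuc k)"
proof -
  obtain \<Xi> :: "'b set" where \<Xi>: "|\<Xi>| =o cardSuc k"
    by (rule exists_subset_card_of_ordIso[OF cardSuc_Card_order[OF Card_order_if_card_order[OF k(1)]] large])
  show ?thesis
  proof (rule add_cov_is_cardSuc_cyl_topology[OF k S \<Xi>, where W = "\<lambda>\<xi>. {[i \<mapsto> \<xi>] | i. i \<in> I}"])
    show "\<exists>t\<in>S. s \<subseteq>\<^sub>m t \<and> (\<exists>w\<in>{[i \<mapsto> \<xi>] | i. i \<in> I}. w \<subseteq>\<^sub>m t)" if "s \<in> S" for \<xi> s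
      using extend[OF that, of \<xi>] by blast
    fix f :: "'a \<Rightarrow> 'b"
    have "{\<xi> \<in> \<Xi>. \<exists>w\<in>{[i \<mapsto> \<xi>] | i. i \<in> I}. f \<in> cyl w} \<subseteq> {\<xi>. \<exists>i\<in>I. f \<in> cyl [i \<mapsto> \<xi>]}" by blast
    then show "|{\<xi> \<in> \<Xi>. \<exists>w\<in>{[i \<mapsto> \<xi>] | i. i \<in> I}. f \<in> cyl w}| \<le>o k"
      by (rule ordLeq_ordIso_trans[OF ordLeq_transitive[OF card_of_mono1 card_of_cyl_singleton_values] I])
  qed
qed

end

section \<open>Box and bounded conditions\<close>

definition box_conditions :: "'c rel \<Rightarrow> ('a \<rightharpoonup> 'b) set" where
  "box_conditions r = {s. |dom s| <o r}"

lemma box_top_eq: "(box_top r :: ('a \<Rightarrow> 'b) topology) = topology_generated_by (cyl ` box_conditions r)"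
proof -
  have "{cyl s | s :: 'a \<rightharpoonup> 'b. |dom s| <o r} = cyl ` box_conditions r" unfolding box_conditions_def
    by blast
  then show ?thesis unfolding box_top_def by simp
qed

lemma map_add_in_box_conditions:
  assumes "Card_order r" "cinfinite r" and "s \<in> box_conditions r" "t \<in> box_conditions r"
  shows "s ++ t \<in> box_conditions r"
  using card_of_Un_ordLess_infinite_Field[of r "dom t" "dom s"] assms
  unfolding box_conditions_def cinfinite_def by (simp add: Un_commute)

lemma singleton_in_box_conditions:
  "Card_order r \<Longrightarrow> cinfinite r \<Longrightarrow> [i \<mapsto> y] \<in> box_conditions r"
  by (simp add: box_conditions_def card_of_finite_ordLess)

lemma cylinder_space_box_conditions:
  fixes r :: "'c rel"
  assumes r: "Card_order r" "cinfinite r"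
  shows "cylinder_space (box_conditions r :: ('a \<rightharpoonup> 'b) set)"
proof
  fix f :: "'a \<Rightarrow> 'b"
  have "Map.empty \<in> box_conditions r" unfolding box_conditions_def
    by (simp add: card_of_finite_ordLess r)
  then show "\<exists>s\<in>box_conditions r. f \<in> cyl s" by (auto simp: cyl_iff)
next
  fix s u :: "'a \<rightharpoonup> 'b" and f
  assume su: "s \<in> box_conditions r" "u \<in> box_conditions r" and f: "f \<in> cyl s" "f \<in> cyl u"
  have "s ++ u \<in> box_conditions r" by (rule map_add_in_box_conditions[OF r su])
  moreover have "s \<subseteq>\<^sub>m s ++ u" and "f \<in> cyl (s ++ u)"
    using f unfolding map_le_def cyl_iff by (auto simp: map_add_def split: option.splits)
  ultimately show "\<exists>t\<in>box_conditions r. s \<subseteq>\<^sub>m t \<and> u \<subseteq>\<^sub>m t \<and> f \<in> cyl t"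
    using map_le_map_add by blast
qed

lemma chains_bounded_box_conditions:
  fixes k :: "'k rel" and r :: "'c rel"
  assumes union: "\<And>C :: ('a \<rightharpoonup> 'b) set. |C| <o k \<Longrightarrow> \<forall>c\<in>C. |dom c| <o r \<Longrightarrow> |\<Union>c\<in>C. dom c| <o r"
  shows "chains_bounded k (box_conditions r :: ('a \<rightharpoonup> 'b) set)"
  unfolding chains_bounded_def
proof (intro allI impI)
  fix C :: "('a \<rightharpoonup> 'b) set"
  assume "C \<subseteq> box_conditions r" and C: "Complete_Partial_Order.chain (\<subseteq>\<^sub>m) C \<and> |C| <o k"
  then have "\<forall>c\<in>C. |dom c| <o r" unfolding box_conditions_def by blast
  obtain u where u: "\<And>c. c \<in> C \<Longrightarrow> c \<subseteq>\<^sub>m u" "dom u = (\<Union>c\<in>C. dom c)"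
    using chain_map_le_upper_bound C by blast
  have "|dom u| <o r" unfolding u(2) using union C \<open>\<forall>c\<in>C. |dom c| <o r\<close> by blast
  then show "\<exists>u\<in>box_conditions r. \<forall>c\<in>C. c \<subseteq>\<^sub>m u" using u(1) unfolding box_conditions_def by blast
qed

lemma box_conditions_extend_singleton:
  fixes r :: "'c rel" and s :: "'a \<rightharpoonup> 'b" and I :: "'a set"
  assumes r: "Card_order r" "cinfinite r" and s: "s \<in> box_conditions r" and I: "|I| =o r"
  shows "\<exists>i\<in>I. \<exists>t\<in>box_conditions r. s \<subseteq>\<^sub>m t \<and> [i \<mapsto> y] \<subseteq>\<^sub>m t"
proof -
  have "\<not> I \<subseteq> dom s"
  proof
    assume "I \<subseteq> dom s"
    then have "|I| <o r" using s unfolding box_conditions_def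
      by (blast intro: ordLeq_ordLess_trans card_of_mono1)
    then show False using not_ordLess_ordIso I by blast
  qed
  then obtain i where i: "i \<in> I" "i \<notin> dom s" by blast
  have "[i \<mapsto> y] ++ s \<in> box_conditions r"
    by (rule map_add_in_box_conditions[OF r singleton_in_box_conditions[OF r] s])
  moreover have "[i \<mapsto> y] \<subseteq>\<^sub>m [i \<mapsto> y] ++ s" using i(2) by (intro map_le_map_add_if_disjoint) simp
  ultimately show ?thesis using i(1) map_le_map_add by blast
qed

definition bd_conditions :: "'a rel \<Rightarrow> ('a \<rightharpoonup> 'b) set" where
  "bd_conditions r = {s. \<exists>a. dom s = underS r a}"

lemma bd_top_eq: "(bd_top r :: ('a \<Rightarrow> 'b) topology) = topology_generated_by (cyl ` bd_conditions r)"
proof -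
  have "{cyl s | (s :: 'a \<rightharpoonup> 'b) a. dom s = underS r a} = cyl ` bd_conditions r"
    unfolding bd_conditions_def by blast
  then show ?thesis unfolding bd_top_def by simp
qed

lemma extend_to_bd_condition:
  fixes s :: "'a \<rightharpoonup> 'b" and y :: 'b
  assumes "dom s \<subseteq> underS r b"
  defines "t \<equiv> ((\<lambda>_. Some y) |` underS r b) ++ s"
  shows "t \<in> bd_conditions r" and "s \<subseteq>\<^sub>m t" and "\<And>x. x \<in> underS r b - dom s \<Longrightarrow> t x = Some y"
proof -
  have "dom t = underS r b" using assms by auto
  then show "t \<in> bd_conditions r" unfolding bd_conditions_def by blast
  show "s \<subseteq>\<^sub>m t" unfolding t_def by (rule map_le_map_add)
  show "t x = Some y" if "x \<in> underS r b - dom s" for x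
    using that unfolding t_def by (auto simp: map_add_def split: option.splits)
qed

lemma cylinder_space_bd_conditions:
  fixes r :: "'a rel"
  assumes r: "card_order r"
  shows "cylinder_space (bd_conditions r :: ('a \<rightharpoonup> 'b) set)"
proof
  fix f :: "'a \<Rightarrow> 'b"
  have "(Some \<circ> f) |` underS r a \<in> bd_conditions r" for a
    unfolding bd_conditions_def by auto
  moreover have "f \<in> cyl ((Some \<circ> f) |` A)" for A by (auto simp: cyl_iff restrict_map_def)
  ultimately show "\<exists>s\<in>bd_conditions r. f \<in> cyl s" by blast
next
  fix s u :: "'a \<rightharpoonup> 'b" and f
  assume s: "s \<in> bd_conditions r" and u: "u \<in> bd_conditions r" and f: "f \<in> cyl s" "f \<in> cyl u"
  obtain a b where a: "dom s = underS r a" and b: "dom u = underS r b"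
    using s u unfolding bd_conditions_def by blast
  have "dom s \<subseteq> dom u \<or> dom u \<subseteq> dom s"
    unfolding a b using card_order_total[OF r, of a b] card_order_underS_mono[OF r] by blast
  then show "\<exists>t\<in>bd_conditions r. s \<subseteq>\<^sub>m t \<and> u \<subseteq>\<^sub>m t \<and> f \<in> cyl t"
  proof
    assume "dom s \<subseteq> dom u"
    then show ?thesis using map_le_if_cyl_dom_subset[OF f] u f(2) map_le_refl by blast
  next
    assume "dom u \<subseteq> dom s"
    then show ?thesis using map_le_if_cyl_dom_subset[OF f(2,1)] s f(1) map_le_refl by blast
  qed
qed

lemma chains_bounded_bd_conditions:
  fixes m :: "'a rel" and k :: "'k rel"
  assumes m: "card_order m" and cof: "cof_is m k"
  shows "chains_bounded k (bd_conditions m :: ('a \<rightharpoonup> 'b) set)"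
  unfolding chains_bounded_def
proof (intro allI impI)
  fix C :: "('a \<rightharpoonup> 'b) set"
  assume "C \<subseteq> bd_conditions m" and C: "Complete_Partial_Order.chain (\<subseteq>\<^sub>m) C \<and> |C| <o k"
  define end_of where "end_of c = (SOME a. dom c = underS m a)" for c :: "'a \<rightharpoonup> 'b"
  have end_of: "dom c = underS m (end_of c)" if "c \<in> C" for c
  proof -
    have "\<exists>a. dom c = underS m a" using \<open>C \<subseteq> bd_conditions m\<close> that unfolding bd_conditions_def by blast
    then show ?thesis unfolding end_of_def by (rule someI_ex)
  qed
  have "|end_of ` C| <o k" using C ordLeq_ordLess_trans[OF card_of_image] by blast
  then obtain b where b: "\<forall>a\<in>end_of ` C. (a, b) \<in> m" using cof_is_bounded[OF m cof] by blast
  obtain u where u: "\<And>c. c \<in> C \<Longrightarrow> c \<subseteq>\<^sub>m u" "dom u = (\<Union>c\<in>C. dom c)"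
    using chain_map_le_upper_bound C by blast
  have "dom u \<subseteq> underS m b"
    unfolding u(2) using end_of b card_order_underS_mono[OF m] by blast
  then have "((\<lambda>_. Some undefined) |` underS m b) ++ u \<in> bd_conditions m"
    and "u \<subseteq>\<^sub>m ((\<lambda>_. Some undefined) |` underS m b) ++ u"
    by (rule extend_to_bd_condition)+
  then show "\<exists>t\<in>bd_conditions m. \<forall>c\<in>C. c \<subseteq>\<^sub>m t" using u(1) map_le_trans by blast
qed

lemma bd_conditions_extend_singleton:
  assumes m: "card_order m" and S0: "cofinal S0 m" and s: "s \<in> bd_conditions m"
  shows "\<exists>i\<in>S0. \<exists>t\<in>bd_conditions m. s \<subseteq>\<^sub>m t \<and> [i \<mapsto> y] \<subseteq>\<^sub>m t"
proof -
  have above: "\<exists>i\<in>S0. a \<noteq> i \<and> (a, i) \<in> m" for a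
    using S0 Field_card_order[OF m] unfolding cofinal_def by blast
  obtain a where a: "dom s = underS m a" using s unfolding bd_conditions_def by blast
  \<comment> \<open>Two steps up \<open>S0\<close>: \<open>i\<close> is a new coordinate and the extension to \<open>underS m b\<close> reaches it.\<close>
  obtain i where i: "i \<in> S0" "a \<noteq> i" "(a, i) \<in> m" using above by blast
  obtain b where b: "i \<noteq> b" "(i, b) \<in> m" using above by blast
  have "i \<notin> dom s"
  proof
    assume "i \<in> dom s"
    then have "(i, a) \<in> m" using a unfolding underS_def by blast
    then show False using i(2,3) antisymD[OF wo_rel.ANTISYM[OF wo_rel_if_card_order[OF m]]] by blast
  qed
  then have i_new: "i \<in> underS m b - dom s" using b unfolding underS_def by blast
  have "(a, b) \<in> m" by (rule transD[OF wo_rel.TRANS[OF wo_rel_if_card_order[OF m]] i(3) b(2)])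
  then have "dom s \<subseteq> underS m b" unfolding a by (rule card_order_underS_mono[OF m])
  note t = extend_to_bd_condition[OF this, where y = y]
  have "[i \<mapsto> y] \<subseteq>\<^sub>m ((\<lambda>_. Some y) |` underS m b) ++ s"
    unfolding map_le_def using t(3)[OF i_new] by simp
  then show ?thesis using t(1,2) i(1) by blast
qed

section \<open>Below a singular cardinal\<close>

locale singular_cofinality =
  fixes k :: "'k rel" and m :: "'m rel"
  assumes k: "card_order k" "cinfinite k"
    and m: "card_order m" and cof: "cof_is m k" and less: "k <o m"
begin

lemma Card_order_m: "Card_order m"
  by (rule Card_order_if_card_order[OF m])

lemma cinfinite_m: "cinfinite m"
  by (rule cinfinite_mono[OF ordLess_imp_ordLeq[OF less] k(2)])

lemma infinite_UNIV_m: "infinite (UNIV :: 'm set)"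
  using cinfinite_m Field_card_order[OF m] unfolding cinfinite_def by simp

lemma not_regularCard_m: "\<not> regularCard m"
proof
  assume reg: "regularCard m"
  obtain S0 where "cofinal S0 m" "|S0| =o k" using cof unfolding cof_is_def by blast
  then have "|S0| =o m" using reg Field_card_order[OF m] unfolding regularCard_def by blast
  then have "k =o m" using ordIso_transitive[OF ordIso_symmetric[OF \<open>|S0| =o k\<close>]] by blast
  then show False using not_ordLess_ordIso[OF less] by blast
qed

lemma cardSuc_ordLess_m:
  assumes r: "Card_order r" "cinfinite r" "r <o m"
  shows "cardSuc r <o m"
proof -
  have "cardSuc r \<le>o m" using cardSuc_ordLess_ordLeq[OF r(1) Card_order_m] r(3) by blast
  moreover have "\<not> cardSuc r =o m"
  proof
    assume "cardSuc r =o m"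
    then have "regularCard m"
      using regularCard_ordIso Cinfinite_cardSuc regularCard_cardSuc r(1,2) by blast
    then show False using not_regularCard_m by blast
  qed
  ultimately show ?thesis using ordLeq_iff_ordLess_or_ordIso by blast
qed

lemma cardSuc_k_ordLeq_UNIV: "cardSuc k \<le>o |UNIV :: 'm set|"
  using cardSuc_ordLess_m[OF Card_order_if_card_order[OF k(1)] k(2) less] ordLeq_card_of_UNIV[OF m]
  by (rule ordLess_imp_ordLeq[OF ordLess_ordLeq_trans])

lemma card_of_UNION_ordLess_m:
  fixes I :: "'i set" and A :: "'i \<Rightarrow> 'a set"
  assumes I: "|I| <o k" and A: "\<forall>i\<in>I. |A i| <o m"
  shows "|\<Union>i\<in>I. A i| <o m"
proof -
  have "\<forall>i\<in>I. \<exists>a. |A i| \<le>o |underS m a|" using card_of_ordLess_underS[OF m] A by blast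
  then obtain a where a: "\<forall>i\<in>I. |A i| \<le>o |underS m (a i)|" by (rule bchoice[THEN exE])
  have UNIV_k: "|UNIV :: 'k set| =o k" by (rule card_of_UNIV_ordIso[OF k(1)])
  have "|UNIV :: 'k set| <o m" by (rule ordIso_ordLess_trans[OF UNIV_k less])
  \<comment> \<open>\<open>a0\<close> makes the common bound \<open>?B\<close> below infinite and at least as large as \<open>I\<close>.\<close>
  then obtain a0 where a0: "|UNIV :: 'k set| \<le>o |underS m a0|" using card_of_ordLess_underS[OF m]
    by blast
  have Ck: "Card_order k" by (rule Card_order_if_card_order[OF k(1)])
  have "|{a0}| <o k" by (rule card_of_finite_ordLess[OF _ Ck k(2)]) simp
  moreover have "|a ` I| <o k" by (rule ordLeq_ordLess_trans[OF card_of_image I])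
  moreover have "infinite (Field k)" using k(2) unfolding cinfinite_def .
  ultimately have "|{a0} \<union> a ` I| <o k" using card_of_Un_ordLess_infinite_Field[OF _ Ck] by blast
  then obtain b where b: "\<forall>x\<in>{a0} \<union> a ` I. (x, b) \<in> m" using cof_is_bounded[OF m cof] by blast
  let ?B = "underS m b"
  have sub: "underS m x \<subseteq> ?B" if "x \<in> {a0} \<union> a ` I" for x
    using card_order_underS_mono[OF m] b that by blast
  have k_B: "|UNIV :: 'k set| \<le>o |?B|" by (rule ordLeq_transitive[OF a0 card_of_mono1[OF sub]]) simp
  moreover have "infinite (UNIV :: 'k set)" using k(2) Field_card_order[OF k(1)] unfolding cinfinite_def
    by simp
  ultimately have inf: "infinite ?B" using card_of_ordLeq_finite by blast
  have "|I| \<le>o |UNIV :: 'k set|"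
    by (rule ordLess_imp_ordLeq[OF ordLess_ordIso_trans[OF I ordIso_symmetric[OF UNIV_k]]])
  then have "|I| \<le>o |?B|" using k_B by (rule ordLeq_transitive)
  moreover have "\<forall>i\<in>I. |A i| \<le>o |?B|"
  proof
    fix i assume i: "i \<in> I"
    show "|A i| \<le>o |?B|"
      by (rule ordLeq_transitive[OF a[rule_format, OF i] card_of_mono1[OF sub]]) (use i in blast)
  qed
  ultimately have "|\<Union>i\<in>I. A i| \<le>o |?B|" by (rule card_of_UNION_ordLeq_infinite[OF inf])
  then show ?thesis by (rule ordLeq_ordLess_trans[OF _ card_of_underS_ordLess[OF m]])
qed

lemma linked_family_avoiding:
  fixes A :: "'m set"
  assumes A: "infinite A" "|A| <o m"
  shows "\<exists>T :: 'm set set. (\<forall>Y\<in>T. Y \<noteq> {} \<and> |Y| <o m) \<and> (\<forall>Y\<in>T. \<forall>Y'\<in>T. Y \<inter> Y' \<noteq> {})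
    \<and> (\<forall>D :: 'm set. |D| \<le>o |A| \<longrightarrow> (\<exists>Y\<in>T. Y \<inter> D = {}))"
proof -
  let ?\<nu> = "cardSuc |A|"
  have A_inf: "Cinfinite |A|"
    using A(1) unfolding cinfinite_def Field_card_of by (simp add: card_of_Card_order card_of_card_order_on)
  have \<nu>_small: "?\<nu> <o m" by (rule cardSuc_ordLess_m[OF card_of_Card_order conjunct1[OF A_inf] A(2)])
  have "\<exists>T :: 'm set set. (\<forall>Y\<in>T. Y \<noteq> {} \<and> |Y| \<le>o ?\<nu>) \<and> (\<forall>Y\<in>T. \<forall>Y'\<in>T. Y \<inter> Y' \<noteq> {})
    \<and> (\<forall>D :: 'm set. |D| <o ?\<nu> \<longrightarrow> (\<exists>Y\<in>T. Y \<inter> D = {}))"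
  proof (rule regularCard_linked_family)
    show "Card_order ?\<nu>" by (rule cardSuc_Card_order[OF card_of_Card_order])
    show "cinfinite ?\<nu>" using Cinfinite_cardSuc[OF A_inf] by blast
    show "regularCard ?\<nu>" by (rule regularCard_cardSuc[OF A_inf])
    show "?\<nu> \<le>o |UNIV :: 'm set|"
      by (rule ordLess_imp_ordLeq[OF ordLess_ordLeq_trans[OF \<nu>_small ordLeq_card_of_UNIV[OF m]]])
  qed
  then obtain T :: "'m set set" where T: "\<forall>Y\<in>T. Y \<noteq> {} \<and> |Y| \<le>o ?\<nu>" "\<forall>Y\<in>T. \<forall>Y'\<in>T. Y \<inter> Y' \<noteq> {}"
    "\<forall>D :: 'm set. |D| <o ?\<nu> \<longrightarrow> (\<exists>Y\<in>T. Y \<inter> D = {})"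
    by blast
  have "|Y| <o m" if "Y \<in> T" for Y using ordLeq_ordLess_trans[OF _ \<nu>_small] T(1) that by blast
  moreover have "|D| <o ?\<nu>" if "|D| \<le>o |A|" for D :: "'m set"
    by (rule ordLeq_ordLess_trans[OF that cardSuc_greater[OF card_of_Card_order]])
  ultimately show ?thesis using T by (intro exI[of _ T]) blast
qed

lemma linked_families:
  obtains J :: "'m set" and T :: "'m \<Rightarrow> 'm set set"
  where "|J| =o k" and "\<forall>j. \<forall>Y\<in>T j. Y \<noteq> {} \<and> |Y| <o m"
    and "\<forall>j. \<forall>Y\<in>T j. \<forall>Y'\<in>T j. Y \<inter> Y' \<noteq> {}"
    and "\<forall>D :: 'm set. |D| <o m \<longrightarrow> (\<exists>j\<in>J. \<exists>Y\<in>T j. Y \<inter> D = {})"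
proof -
  obtain S0 where S0: "cofinal S0 m" "|S0| =o k" using cof unfolding cof_is_def by blast
  have "Cinfinite |S0|"
    by (rule Cinfinite_cong[OF ordIso_symmetric[OF S0(2)]]) (use k Card_order_if_card_order in blast)
  then have "infinite S0" unfolding cinfinite_def Field_card_of by blast
  \<comment> \<open>Adding \<open>S0\<close> only serves to make these sets infinite.\<close>
  then have A_inf: "infinite (underS m j \<union> S0)" for j by simp
  have A_small: "|underS m j \<union> S0| <o m" for j
    using cinfinite_m unfolding cinfinite_def
    by (rule card_of_Un_ordLess_infinite_Field[OF _ Card_order_m card_of_underS_ordLess[OF m]
          ordIso_ordLess_trans[OF S0(2) less]])
  have "\<forall>j. \<exists>T :: 'm set set. (\<forall>Y\<in>T. Y \<noteq> {} \<and> |Y| <o m) \<and> (\<forall>Y\<in>T. \<forall>Y'\<in>T. Y \<inter> Y' \<noteq> {})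
    \<and> (\<forall>D :: 'm set. |D| \<le>o |underS m j \<union> S0| \<longrightarrow> (\<exists>Y\<in>T. Y \<inter> D = {}))"
    using linked_family_avoiding[OF A_inf A_small] by blast
  then obtain T :: "'m \<Rightarrow> 'm set set" where T: "\<forall>j. (\<forall>Y\<in>T j. Y \<noteq> {} \<and> |Y| <o m)
    \<and> (\<forall>Y\<in>T j. \<forall>Y'\<in>T j. Y \<inter> Y' \<noteq> {}) \<and> (\<forall>D :: 'm set. |D| \<le>o |underS m j \<union> S0| \<longrightarrow> (\<exists>Y\<in>T j. Y \<inter> D = {}))"
    by (rule choice[THEN exE])
  have "\<forall>j. \<forall>Y\<in>T j. Y \<noteq> {} \<and> |Y| <o m" using T by blast
  moreover have "\<forall>j. \<forall>Y\<in>T j. \<forall>Y'\<in>T j. Y \<inter> Y' \<noteq> {}" using T by blast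
  moreover have "\<forall>D :: 'm set. |D| <o m \<longrightarrow> (\<exists>j\<in>S0. \<exists>Y\<in>T j. Y \<inter> D = {})"
  proof (intro allI impI)
    fix D :: "'m set" assume D: "|D| <o m"
    obtain a where a: "|D| \<le>o |underS m a|" using card_of_ordLess_underS[OF m D] by blast
    obtain j where j: "j \<in> S0" "(a, j) \<in> m" using S0(1) Field_card_order[OF m] unfolding cofinal_def
      by blast
    have "underS m a \<subseteq> underS m j \<union> S0" using card_order_underS_mono[OF m j(2)] by blast
    then have "|D| \<le>o |underS m j \<union> S0|" by (rule ordLeq_transitive[OF a card_of_mono1])
    then have "\<exists>Y\<in>T j. Y \<inter> D = {}" using conjunct2[OF conjunct2[OF spec[OF T, of j]]] by blast
    then show "\<exists>j\<in>S0. \<exists>Y\<in>T j. Y \<inter> D = {}" using j(1) by blast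
  qed
  ultimately show thesis by (rule that[OF S0(2)])
qed

end

section \<open>The five spaces\<close>

lemma add_cov_is_box_top_regular:
  fixes k :: "'k rel"
  assumes k: "card_order k" "cinfinite k" "regularCard k"
    and I_large: "k \<le>o |UNIV :: 'i set|" and B_large: "cardSuc k \<le>o |UNIV :: 'b set|"
  shows "add_cov_is k (box_top k :: ('i \<Rightarrow> 'b) topology) (cardSuc k)"
proof -
  have Ck: "Card_order k" by (rule Card_order_if_card_order[OF k(1)])
  interpret cylinder_space "box_conditions k :: ('i \<rightharpoonup> 'b) set"
    by (rule cylinder_space_box_conditions[OF Ck k(2)])
  obtain I :: "'i set" where I: "|I| =o k" by (rule exists_subset_card_of_ordIso[OF Ck I_large])
  have "chains_bounded k (box_conditions k :: ('i \<rightharpoonup> 'b) set)"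
    using card_of_UNION_ordLess_infinite_Field_regularCard[OF k(3)] Ck k(2)
    by (intro chains_bounded_box_conditions) blast
  then have "add_cov_is k cyl_topology (cardSuc k)"
    using box_conditions_extend_singleton[OF Ck k(2) _ I]
    by (rule add_cov_is_cardSuc_cyl_topology_singletons[OF k(1,2) _ I B_large])
  then show ?thesis by (simp only: box_top_eq)
qed

lemma add_cov_is_bd_top:
  fixes k :: "'k rel" and m :: "'m rel"
  assumes k: "card_order k" "cinfinite k" and m: "card_order m" and cof: "cof_is m k"
    and B_large: "cardSuc k \<le>o |UNIV :: 'b set|"
  shows "add_cov_is k (bd_top m :: ('m \<Rightarrow> 'b) topology) (cardSuc k)"
proof -
  interpret cylinder_space "bd_conditions m :: ('m \<rightharpoonup> 'b) set"
    by (rule cylinder_space_bd_conditions[OF m])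
  obtain S0 where S0: "cofinal S0 m" "|S0| =o k" using cof unfolding cof_is_def by blast
  have "add_cov_is k cyl_topology (cardSuc k)"
    using bd_conditions_extend_singleton[OF m S0(1)]
    by (rule add_cov_is_cardSuc_cyl_topology_singletons[OF k chains_bounded_bd_conditions[OF m cof]
          S0(2) B_large])
  then show ?thesis by (simp only: bd_top_eq)
qed

lemma (in singular_cofinality) add_cov_is_box_top_singular:
  fixes b\<^sub>0 b\<^sub>1 :: 'b
  assumes b: "b\<^sub>0 \<noteq> b\<^sub>1"
  shows "add_cov_is k (box_top m :: ('m \<Rightarrow> 'b) topology) (cardSuc k)"
proof -
  interpret cylinder_space "box_conditions m :: ('m \<rightharpoonup> 'b) set"
    by (rule cylinder_space_box_conditions[OF Card_order_m cinfinite_m])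
  have Ck: "Card_order k" by (rule Card_order_if_card_order[OF k(1)])
  obtain \<Xi> :: "'m set" where \<Xi>: "|\<Xi>| =o cardSuc k"
    by (rule exists_subset_card_of_ordIso[OF cardSuc_Card_order[OF Ck] cardSuc_k_ordLeq_UNIV])
  have \<Xi>_small: "|\<Xi>| <o m" by (rule ordIso_ordLess_trans[OF \<Xi> cardSuc_ordLess_m[OF Ck k(2) less]])
  obtain J :: "'m set" and T :: "'m \<Rightarrow> 'm set set" where J: "|J| =o k"
    and T: "\<forall>j. \<forall>Y\<in>T j. Y \<noteq> {} \<and> |Y| <o m" "\<forall>j. \<forall>Y\<in>T j. \<forall>Y'\<in>T j. Y \<inter> Y' \<noteq> {}"
      "\<forall>D :: 'm set. |D| <o m \<longrightarrow> (\<exists>j\<in>J. \<exists>Y\<in>T j. Y \<inter> D = {})"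
    by (rule linked_families)
  have "|UNIV \<times> UNIV :: ('m \<times> 'm) set| \<le>o |UNIV :: 'm set|"
    by (rule ordIso_imp_ordLeq[OF card_of_Times_same_infinite[OF infinite_UNIV_m]])
  then have "\<exists>\<pi> :: 'm \<times> 'm \<Rightarrow> 'm. inj_on \<pi> (UNIV \<times> UNIV) \<and> \<pi> ` (UNIV \<times> UNIV) \<subseteq> UNIV"
    by (rule iffD2[OF card_of_ordLeq])
  then obtain \<pi> :: "'m \<times> 'm \<Rightarrow> 'm" where \<pi>: "inj \<pi>" by auto
  let ?code = "column_code \<pi> \<Xi> b\<^sub>0 b\<^sub>1"
  let ?W = "\<lambda>\<xi>. {?code Y \<xi> | j Y. j \<in> J \<and> Y \<in> T j}"
  have "add_cov_is k cyl_topology (cardSuc k)"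
  proof (rule add_cov_is_cardSuc_cyl_topology[OF k _ \<Xi>, where W = ?W])
    show "chains_bounded k (box_conditions m :: ('m \<rightharpoonup> 'b) set)"
      using card_of_UNION_ordLess_m by (intro chains_bounded_box_conditions) blast
  next
    fix \<xi> :: 'm and s :: "'m \<rightharpoonup> 'b" assume s: "s \<in> box_conditions m"
    have "|dom s| <o m" using s unfolding box_conditions_def by simp
    then have "|fst ` (\<pi> -` dom s)| <o m" by (rule ordLeq_ordLess_trans[OF card_of_fst_vimage_inj[OF \<pi>]])
    then obtain j Y where jY: "j \<in> J" "Y \<in> T j" "Y \<inter> fst ` (\<pi> -` dom s) = {}" using T(3) by blast
    have disjoint: "dom (?code Y \<xi>) \<inter> dom s = {}"
    proof (rule ccontr)
      assume "dom (?code Y \<xi>) \<inter> dom s \<noteq> {}"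
      then obtain x \<eta> where x: "x \<in> Y" "(x, \<eta>) \<in> \<pi> -` dom s" unfolding dom_column_code by blast
      then have "x \<in> fst ` (\<pi> -` dom s)" by (metis fst_conv image_eqI)
      then show False using x(1) jY(3) by blast
    qed
    have "|Y| <o m" using T(1) jY(2) by blast
    then have "|dom (?code Y \<xi>)| <o m"
      unfolding dom_column_code
      by (rule ordLeq_ordLess_trans[OF card_of_image
            card_of_Times_ordLess_infinite_Field[OF Card_order_m cinfinite_m _ \<Xi>_small]])
    then have "?code Y \<xi> ++ s \<in> box_conditions m"
      using s
        by (intro map_add_in_box_conditions[OF Card_order_m cinfinite_m]) (simp_all add: box_conditions_def)
    moreover have "?code Y \<xi> \<subseteq>\<^sub>m ?code Y \<xi> ++ s" by (rule map_le_map_add_if_disjoint[OF disjoint])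
    ultimately show "\<exists>t\<in>box_conditions m. s \<subseteq>\<^sub>m t \<and> (\<exists>w\<in>?W \<xi>. w \<subseteq>\<^sub>m t)"
      using jY(1,2) map_le_map_add by blast
  next
    fix f :: "'m \<Rightarrow> 'b"
    have "|{\<xi> \<in> \<Xi>. \<exists>w\<in>?W \<xi>. f \<in> cyl w}| \<le>o |J|"
    proof (rule card_of_ordLeq_if_unique_index[where P = "\<lambda>j \<xi>. \<xi> \<in> \<Xi> \<and> (\<exists>Y\<in>T j. f \<in> cyl (?code Y \<xi>))"])
      show "\<exists>j\<in>J. \<xi> \<in> \<Xi> \<and> (\<exists>Y\<in>T j. f \<in> cyl (?code Y \<xi>))"
        if "\<xi> \<in> {\<xi> \<in> \<Xi>. \<exists>w\<in>?W \<xi>. f \<in> cyl w}" for \<xi>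
        using that by blast
    next
      fix j \<xi> \<xi>'
      assume "j \<in> J" "\<xi> \<in> \<Xi> \<and> (\<exists>Y\<in>T j. f \<in> cyl (?code Y \<xi>))" "\<xi>' \<in> \<Xi> \<and> (\<exists>Y\<in>T j. f \<in> cyl (?code Y \<xi>'))"
      then obtain Y Y' where Y: "\<xi> \<in> \<Xi>" "Y \<in> T j" "f \<in> cyl (?code Y \<xi>)"
        and Y': "Y' \<in> T j" "f \<in> cyl (?code Y' \<xi>')" by blast
      obtain x where x: "x \<in> Y" "x \<in> Y'" using T(2) Y(2) Y'(1) by blast
      show "\<xi> = \<xi>'" by (rule column_code_determines[OF \<pi> b Y(1) x Y(3) Y'(2)])
    qed
    then show "|{\<xi> \<in> \<Xi>. \<exists>w\<in>?W \<xi>. f \<in> cyl w}| \<le>o k" using J by (rule ordLeq_ordIso_trans)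
  qed
  then show ?thesis by (simp only: box_top_eq)
qed

theorem mainTheorem8:
  fixes k :: "'k rel" and m :: "'m rel"
  assumes "card_order k" and "cinfinite k" and "regularCard k"
    and "card_order m" and "cof_is m k" and "(k, m) \<in> ordLess"
  shows "add_cov_is k (box_top k :: ('k \<Rightarrow> 'm) topology) (cardSuc k)
       \<and> add_cov_is k (bd_top m :: ('m \<Rightarrow> 'm) topology) (cardSuc k)
       \<and> add_cov_is k (box_top k :: ('m \<Rightarrow> 'm) topology) (cardSuc k)
       \<and> add_cov_is k (box_top m :: ('m \<Rightarrow> bool) topology) (cardSuc k)
       \<and> add_cov_is k (box_top m :: ('m \<Rightarrow> 'm) topology) (cardSuc k)"
proof -
  interpret singular_cofinality k m using assms by unfold_locales
  have k_le_m: "k \<le>o |UNIV :: 'm set|"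
    by (rule ordLeq_transitive[OF ordLess_imp_ordLeq[OF less] ordLeq_card_of_UNIV[OF m]])
  obtain b :: 'm where "b \<noteq> undefined"
    using ex_new_if_finite[OF infinite_UNIV_m, of "{undefined}"] by blast
  show ?thesis
    using add_cov_is_box_top_regular[OF assms(1-3) ordLeq_card_of_UNIV[OF assms(1)] cardSuc_k_ordLeq_UNIV]
      add_cov_is_bd_top[OF assms(1,2,4,5) cardSuc_k_ordLeq_UNIV]
      add_cov_is_box_top_regular[OF assms(1-3) k_le_m cardSuc_k_ordLeq_UNIV]
      add_cov_is_box_top_singular[of True False] add_cov_is_box_top_singular[OF \<open>b \<noteq> undefined\<close>]
    by simp
qed

end
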